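(* Let $\gamma$ be a future-directed timelike curve in $M$. Any two distinct elements $\bar P_i=(I^-[\gamma],P_i^* )$ and $\bar P_j=(I^-[\gamma],P_j^* )$ of $\bar M$ are $T_1$ separated in $(\bar M,\bar{\mathcal T})$: there is a $\bar{\mathcal T}$-open set containing $\bar P_i$ but not $\bar P_j$, and one containing $\bar P_j$ but not $\bar P_i$.
   Context: Let $M$ be a strongly causal spacetime (a time-oriented Lorentzian manifold in which every point has a neighbourhood that no non-spacelike curve enters more than once). $I^\pm(p)$ denotes the chronological future/past of $p\in M$, $I^\pm(S)=\bigcup_{s\in S}I^\pm(s)$, and for a curve $\gamma$ we write $I^\pm[\gamma]=I^\pm(\gamma)$. A past-set is a set $I^-(S)$ with $S\subset M$. An IP is a nonempty past-set that is not the union of two proper subsets which are past-sets. IFs are defined dually. For an IP $P$, $f(P)=I^+(\{x:P\subset I^-(x)\})$. For an IF $P^*$, $p(P^* )=I^-(\{x:P^*\subset I^+(x)\})$. $R_{pf}$ is the set of pairs $(P,Q^* )$ (with $P$ an IP and $Q^*$ an IF) such that both of the following hold: - $Q^*$ is a maximal IF (under inclusion) contained in $f(P)$; - $P$ is a maximal IP contained in $p(Q^* )$. $\bar M$ is the set of pairs $\bar P=(P,P^* )$ such that one of the following holds: - $(P,P^* )\in R_{pf}$; - $P=\emptyset$ and $P^*$ is an IF occurring in no pair of $R_{pf}$; - $P^*=\emptyset$ and $P$ is an IP occurring in no pair of $R_{pf}$. Limits of sets: for past-sets $P_n$ and $Q$, $Q=\lim P_n$ means both of the following: - (i) each $x\in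 Q$ lies in $P_n$ for all sufficiently large $n$; - (ii) for each $x\in M$ with $I^-(x)\not\subset Q$, one has $I^-(x)\not\subset P_n$ for all sufficiently large $n$. Limits of future-sets are defined dually. For $\bar S\subset\bar M$ define: - $L^+_{IF}(\bar S)=\{\bar Q:Q^*\ne\emptyset,\ Q^*\subset\bigcup_{\bar R\in\bar S}R^*\}$; - $L^-_{IP}(\bar S)=\{\bar Q:Q\ne\emptyset,\ Q\subset\bigcup_{\bar R\in\bar S}R\}$; - $Cl_{FB}(\bar S)=\bar S\cup\{\bar Q:Q^*=\emptyset,\ Q=\lim R_n\text{ for some sequence }\bar R_n\in\bar S\}$; - $Cl_{PB}(\bar S)=\bar S\cup\{\bar Q:Q=\emptyset,\ Q^*=\lim R^*_n\text{ for some sequence }\bar R_n\in\bar S\}$; - $L^+(\bar S)=Cl_{FB}[\bar S\cup L^+_{IF}(\bar S)]$; - $L^-(\bar S)=Cl_{PB}[\bar S\cup L^-_{IP}(\bar S)]$. $\bar{\mathcal T}$ is the coarsest topology on $\bar M$ in which $\bar M\setminus L^\pm(\bar S)$ are open for every $\bar S\subset\bar M$. *)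

theory Defs
  imports "HOL-Analysis.Analysis"
begin

fun Ck_on :: "nat \<Rightarrow> ('a::euclidean_space \<Rightarrow> 'b::real_normed_vector) \<Rightarrow> 'a set \<Rightarrow> bool" where
  "Ck_on 0 f S = continuous_on S f"
| "Ck_on (Suc k) f S =
     (\<exists>f'. (\<forall>x\<in>S. (f has_derivative f' x) (at x)) \<and> (\<forall>v. Ck_on k (\<lambda>x. f' x v) S))"

definition smooth_on :: "('a::euclidean_space \<Rightarrow> 'b::real_normed_vector) \<Rightarrow> 'a set \<Rightarrow> bool" where
  "smooth_on f S \<longleftrightarrow> (\<forall>k. Ck_on k f S)"

type_synonym ('m, 'n) chart = "'m set \<times> ('m \<Rightarrow> real^'n)"

definition is_chart :: "('m::topological_space, 'n::finite) chart \<Rightarrow> bool" where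
  "is_chart c \<longleftrightarrow> open (fst c) \<and> open (snd c ` fst c) \<and>
     (\<exists>\<psi>. homeomorphism (fst c) (snd c ` fst c) (snd c) \<psi>)"

definition overlap_dom :: "('m, 'n) chart \<Rightarrow> ('m, 'n) chart \<Rightarrow> (real^'n) set" where
  "overlap_dom c d = snd c ` (fst c \<inter> fst d)"

definition transition :: "('m, 'n::finite) chart \<Rightarrow> ('m, 'n) chart \<Rightarrow> real^'n \<Rightarrow> real^'n" where
  "transition c d = snd d \<circ> inv_into (fst c) (snd c)"

definition smooth_atlas :: "('m::topological_space, 'n::finite) chart set \<Rightarrow> bool" where
  "smooth_atlas A \<longleftrightarrow> (\<forall>c\<in>A. is_chart c) \<and> (\<Union>c\<in>A. fst c) = UNIV \<and>
     (\<forall>c\<in>A. \<forall>d\<in>A. smooth_on (transition c d) (overlap_dom c d))"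

definition Jac :: "(real^'n::finite \<Rightarrow> real^'n) \<Rightarrow> real^'n \<Rightarrow> real^'n^'n" where
  "Jac f x = matrix (frechet_derivative f (at x))"

definition minkowski_eta :: "'n::finite \<Rightarrow> real^'n^'n" where
  "minkowski_eta i0 = (\<chi> i j. if i = j then (if i = i0 then -1 else 1) else 0)"

definition lorentzian_matrix :: "real^'n^'n::finite \<Rightarrow> bool" where
  "lorentzian_matrix G \<longleftrightarrow> transpose G = G \<and>
     (\<exists>(P::real^'n^'n) i0. invertible P \<and> transpose P ** G ** P = minkowski_eta i0)"

definition qform :: "real^'n^'n::finite \<Rightarrow> real^'n \<Rightarrow> real^'n \<Rightarrow> real" where
  "qform G v w = v \<bullet> (G *v w)"

text \<open>A Lorentzian metric is given by its component matrices in each chart of the atlas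
  (smooth, Lorentzian, and transforming as a (0,2)-tensor); a time orientation is a
  continuous timelike vector field, given by its components in each chart.\<close>
definition lorentzian_metric ::
  "('m::topological_space, 'n::finite) chart set \<Rightarrow> (('m,'n) chart \<Rightarrow> real^'n \<Rightarrow> real^'n^'n) \<Rightarrow> bool" where
  "lorentzian_metric A g \<longleftrightarrow>
     (\<forall>c\<in>A. smooth_on (g c) (snd c ` fst c) \<and> (\<forall>x\<in>snd c ` fst c. lorentzian_matrix (g c x))) \<and>
     (\<forall>c\<in>A. \<forall>d\<in>A. \<forall>x\<in>overlap_dom c d.
        g c x = transpose (Jac (transition c d) x) ** g d (transition c d x) ** Jac (transition c d) x)"

definition time_orientation ::
  "('m::topological_space, 'n::finite) chart set \<Rightarrow> (('m,'n) chart \<Rightarrow> real^'n \<Rightarrow> real^'n^'n)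
     \<Rightarrow> (('m,'n) chart \<Rightarrow> real^'n \<Rightarrow> real^'n) \<Rightarrow> bool" where
  "time_orientation A g T \<longleftrightarrow>
     (\<forall>c\<in>A. continuous_on (snd c ` fst c) (T c) \<and>
        (\<forall>x\<in>snd c ` fst c. qform (g c x) (T c x) (T c x) < 0)) \<and>
     (\<forall>c\<in>A. \<forall>d\<in>A. \<forall>x\<in>overlap_dom c d.
        T d (transition c d x) = Jac (transition c d) x *v T c x)"

definition spacetime ::
  "('m::{t2_space, second_countable_topology}, 'n::finite) chart set \<Rightarrow> (('m,'n) chart \<Rightarrow> real^'n \<Rightarrow> real^'n^'n)
     \<Rightarrow> (('m,'n) chart \<Rightarrow> real^'n \<Rightarrow> real^'n) \<Rightarrow> bool" where
  "spacetime A g T \<longleftrightarrow> CARD('n) \<ge> 2 \<and> connected (UNIV :: 'm set) \<and>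
     smooth_atlas A \<and> lorentzian_metric A g \<and> time_orientation A g T"

definition C1_curve_with ::
  "('m::topological_space, 'n::finite) chart set \<Rightarrow> (('m,'n) chart \<Rightarrow> real^'n \<Rightarrow> real^'n \<Rightarrow> bool)
     \<Rightarrow> (real \<Rightarrow> 'm) \<Rightarrow> real set \<Rightarrow> bool" where
  "C1_curve_with A cond \<gamma> I \<longleftrightarrow> is_interval I \<and> (\<exists>a\<in>I. \<exists>b\<in>I. a < b) \<and> continuous_on I \<gamma> \<and>
     (\<forall>c\<in>A. \<exists>D. continuous_on (I \<inter> \<gamma> -` fst c) D \<and>
        (\<forall>t\<in>I \<inter> \<gamma> -` fst c. ((snd c \<circ> \<gamma>) has_vector_derivative D t) (at t within I)
            \<and> cond c (snd c (\<gamma> t)) (D t)))"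

definition future_timelike_vec ::
  "(('m,'n) chart \<Rightarrow> real^'n \<Rightarrow> real^'n^'n) \<Rightarrow> (('m,'n) chart \<Rightarrow> real^'n \<Rightarrow> real^'n)
     \<Rightarrow> ('m,'n::finite) chart \<Rightarrow> real^'n \<Rightarrow> real^'n \<Rightarrow> bool" where
  "future_timelike_vec g T c x v \<longleftrightarrow> qform (g c x) v v < 0 \<and> qform (g c x) (T c x) v < 0"

definition future_causal_vec ::
  "(('m,'n) chart \<Rightarrow> real^'n \<Rightarrow> real^'n^'n) \<Rightarrow> (('m,'n) chart \<Rightarrow> real^'n \<Rightarrow> real^'n)
     \<Rightarrow> ('m,'n::finite) chart \<Rightarrow> real^'n \<Rightarrow> real^'n \<Rightarrow> bool" where
  "future_causal_vec g T c x v \<longleftrightarrow> v \<noteq> 0 \<and> qform (g c x) v v \<le> 0 \<and> qform (g c x) (T c x) v < 0"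

definition fd_timelike_curve where
  "fd_timelike_curve A g T = C1_curve_with A (future_timelike_vec g T)"

definition fd_causal_curve where
  "fd_causal_curve A g T = C1_curve_with A (future_causal_vec g T)"

definition chron :: "('m::topological_space, 'n::finite) chart set \<Rightarrow> (('m,'n) chart \<Rightarrow> real^'n \<Rightarrow> real^'n^'n)
     \<Rightarrow> (('m,'n) chart \<Rightarrow> real^'n \<Rightarrow> real^'n) \<Rightarrow> 'm \<Rightarrow> 'm \<Rightarrow> bool" where
  "chron A g T p q \<longleftrightarrow> (\<exists>\<gamma> a b. a < b \<and> fd_timelike_curve A g T \<gamma> {a..b} \<and> \<gamma> a = p \<and> \<gamma> b = q)"

text \<open>Strong causality: every neighbourhood of every point contains a neighbourhood
  which no non-spacelike curve enters more than once.\<close>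
definition strongly_causal :: "('m::topological_space, 'n::finite) chart set \<Rightarrow> (('m,'n) chart \<Rightarrow> real^'n \<Rightarrow> real^'n^'n)
     \<Rightarrow> (('m,'n) chart \<Rightarrow> real^'n \<Rightarrow> real^'n) \<Rightarrow> bool" where
  "strongly_causal A g T \<longleftrightarrow>
     (\<forall>p W. open W \<and> p \<in> W \<longrightarrow>
        (\<exists>V. open V \<and> p \<in> V \<and> V \<subseteq> W \<and>
           (\<forall>\<gamma> I. fd_causal_curve A g T \<gamma> I \<longrightarrow> connected {t\<in>I. \<gamma> t \<in> V})))"

section \<open>Causal boundary (for a chronological relation chr, chr p q meaning p << q)\<close>

definition Ifut :: "('m \<Rightarrow> 'm \<Rightarrow> bool) \<Rightarrow> 'm set \<Rightarrow> 'm set" where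
  "Ifut chr S = {y. \<exists>s\<in>S. chr s y}"

definition Ipast :: "('m \<Rightarrow> 'm \<Rightarrow> bool) \<Rightarrow> 'm set \<Rightarrow> 'm set" where
  "Ipast chr S = {y. \<exists>s\<in>S. chr y s}"

definition past_set :: "('m \<Rightarrow> 'm \<Rightarrow> bool) \<Rightarrow> 'm set \<Rightarrow> bool" where
  "past_set chr X \<longleftrightarrow> (\<exists>S. X = Ipast chr S)"

definition future_set :: "('m \<Rightarrow> 'm \<Rightarrow> bool) \<Rightarrow> 'm set \<Rightarrow> bool" where
  "future_set chr X \<longleftrightarrow> (\<exists>S. X = Ifut chr S)"

definition IP :: "('m \<Rightarrow> 'm \<Rightarrow> bool) \<Rightarrow> 'm set \<Rightarrow> bool" where
  "IP chr X \<longleftrightarrow> past_set chr X \<and> X \<noteq> {} \<and>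
     \<not> (\<exists>Y Z. past_set chr Y \<and> past_set chr Z \<and> Y \<subset> X \<and> Z \<subset> X \<and> X = Y \<union> Z)"

definition IF :: "('m \<Rightarrow> 'm \<Rightarrow> bool) \<Rightarrow> 'm set \<Rightarrow> bool" where
  "IF chr X \<longleftrightarrow> future_set chr X \<and> X \<noteq> {} \<and>
     \<not> (\<exists>Y Z. future_set chr Y \<and> future_set chr Z \<and> Y \<subset> X \<and> Z \<subset> X \<and> X = Y \<union> Z)"

definition f_of :: "('m \<Rightarrow> 'm \<Rightarrow> bool) \<Rightarrow> 'm set \<Rightarrow> 'm set" where
  "f_of chr P = Ifut chr {x. P \<subseteq> Ipast chr {x}}"

definition p_of :: "('m \<Rightarrow> 'm \<Rightarrow> bool) \<Rightarrow> 'm set \<Rightarrow> 'm set" where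
  "p_of chr F = Ipast chr {x. F \<subseteq> Ifut chr {x}}"

definition maximal_IF_in :: "('m \<Rightarrow> 'm \<Rightarrow> bool) \<Rightarrow> 'm set \<Rightarrow> 'm set \<Rightarrow> bool" where
  "maximal_IF_in chr F X \<longleftrightarrow> IF chr F \<and> F \<subseteq> X \<and>
     (\<forall>F'. IF chr F' \<and> F' \<subseteq> X \<and> F \<subseteq> F' \<longrightarrow> F' = F)"

definition maximal_IP_in :: "('m \<Rightarrow> 'm \<Rightarrow> bool) \<Rightarrow> 'm set \<Rightarrow> 'm set \<Rightarrow> bool" where
  "maximal_IP_in chr P X \<longleftrightarrow> IP chr P \<and> P \<subseteq> X \<and>
     (\<forall>P'. IP chr P' \<and> P' \<subseteq> X \<and> P \<subseteq> P' \<longrightarrow> P' = P)"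

definition Rpf :: "('m \<Rightarrow> 'm \<Rightarrow> bool) \<Rightarrow> ('m set \<times> 'm set) set" where
  "Rpf chr = {(P, Q). maximal_IF_in chr Q (f_of chr P) \<and> maximal_IP_in chr P (p_of chr Q)}"

definition Mbar :: "('m \<Rightarrow> 'm \<Rightarrow> bool) \<Rightarrow> ('m set \<times> 'm set) set" where
  "Mbar chr = {(P, F). (P, F) \<in> Rpf chr
      \<or> (P = {} \<and> IF chr F \<and> \<not> (\<exists>P'. (P', F) \<in> Rpf chr))
      \<or> (F = {} \<and> IP chr P \<and> \<not> (\<exists>F'. (P, F') \<in> Rpf chr))}"

definition lim_past :: "('m \<Rightarrow> 'm \<Rightarrow> bool) \<Rightarrow> (nat \<Rightarrow> 'm set) \<Rightarrow> 'm set \<Rightarrow> bool" where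
  "lim_past chr Pn Q \<longleftrightarrow>
     (\<forall>x\<in>Q. eventually (\<lambda>n. x \<in> Pn n) sequentially) \<and>
     (\<forall>x. \<not> Ipast chr {x} \<subseteq> Q \<longrightarrow> eventually (\<lambda>n. \<not> Ipast chr {x} \<subseteq> Pn n) sequentially)"

definition lim_fut :: "('m \<Rightarrow> 'm \<Rightarrow> bool) \<Rightarrow> (nat \<Rightarrow> 'm set) \<Rightarrow> 'm set \<Rightarrow> bool" where
  "lim_fut chr Fn Q \<longleftrightarrow>
     (\<forall>x\<in>Q. eventually (\<lambda>n. x \<in> Fn n) sequentially) \<and>
     (\<forall>x. \<not> Ifut chr {x} \<subseteq> Q \<longrightarrow> eventually (\<lambda>n. \<not> Ifut chr {x} \<subseteq> Fn n) sequentially)"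

definition LIF_plus :: "('m \<Rightarrow> 'm \<Rightarrow> bool) \<Rightarrow> ('m set \<times> 'm set) set \<Rightarrow> ('m set \<times> 'm set) set" where
  "LIF_plus chr S = {Q\<in>Mbar chr. snd Q \<noteq> {} \<and> snd Q \<subseteq> (\<Union>R\<in>S. snd R)}"

definition LIP_minus :: "('m \<Rightarrow> 'm \<Rightarrow> bool) \<Rightarrow> ('m set \<times> 'm set) set \<Rightarrow> ('m set \<times> 'm set) set" where
  "LIP_minus chr S = {Q\<in>Mbar chr. fst Q \<noteq> {} \<and> fst Q \<subseteq> (\<Union>R\<in>S. fst R)}"

definition Cl_FB :: "('m \<Rightarrow> 'm \<Rightarrow> bool) \<Rightarrow> ('m set \<times> 'm set) set \<Rightarrow> ('m set \<times> 'm set) set" where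
  "Cl_FB chr S = S \<union> {Q\<in>Mbar chr. snd Q = {} \<and>
      (\<exists>R. (\<forall>n. R n \<in> S) \<and> lim_past chr (\<lambda>n. fst (R n)) (fst Q))}"

definition Cl_PB :: "('m \<Rightarrow> 'm \<Rightarrow> bool) \<Rightarrow> ('m set \<times> 'm set) set \<Rightarrow> ('m set \<times> 'm set) set" where
  "Cl_PB chr S = S \<union> {Q\<in>Mbar chr. fst Q = {} \<and>
      (\<exists>R. (\<forall>n. R n \<in> S) \<and> lim_fut chr (\<lambda>n. snd (R n)) (snd Q))}"

definition L_plus :: "('m \<Rightarrow> 'm \<Rightarrow> bool) \<Rightarrow> ('m set \<times> 'm set) set \<Rightarrow> ('m set \<times> 'm set) set" where
  "L_plus chr S = Cl_FB chr (S \<union> LIF_plus chr S)"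

definition L_minus :: "('m \<Rightarrow> 'm \<Rightarrow> bool) \<Rightarrow> ('m set \<times> 'm set) set \<Rightarrow> ('m set \<times> 'm set) set" where
  "L_minus chr S = Cl_PB chr (S \<union> LIP_minus chr S)"

definition Tbar :: "('m \<Rightarrow> 'm \<Rightarrow> bool) \<Rightarrow> ('m set \<times> 'm set) topology" where
  "Tbar chr = subtopology
     (topology_generated_by
        ({Mbar chr - L_plus chr S | S. S \<subseteq> Mbar chr} \<union> {Mbar chr - L_minus chr S | S. S \<subseteq> Mbar chr}))
     (Mbar chr)"

end

theory Submission
  imports Defs
begin

text \<open>Only the common first component matters, not that it is the past of a timelike curve.
  Let \<open>P\<close> be that component. If \<open>P = {}\<close>, both points are pure future-boundary points with
  distinct IFs. The limit of the constant sequence \<open>P\<^sub>j\<^sup>*\<close> is \<open>P\<^sub>j\<^sup>*\<close> itself, so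
  \<open>L\<^sup>-{P\<^sub>j}\<close> misses \<open>P\<^sub>i\<close>. If \<open>P \<noteq> {}\<close>, both pairs lie in \<open>R\<^sub>p\<^sub>f\<close>. Maximality of
  \<open>P\<^sub>j\<^sup>*\<close> in \<open>f(P)\<close> forbids \<open>P\<^sub>i\<^sup>* \<subseteq> P\<^sub>j\<^sup>*\<close>, so \<open>L\<^sup>+{P\<^sub>j}\<close> misses \<open>P\<^sub>i\<close>. In both cases the
  complement of that closed set is the required open set.\<close>

lemma openin_Tbar_generator:
  assumes "B \<in> {Mbar chr - L_plus chr S | S. S \<subseteq> Mbar chr} \<union> {Mbar chr - L_minus chr S | S. S \<subseteq> Mbar chr}"
  shows "openin (Tbar chr) B"
proof -
  have "openin (topology_generated_by
      ({Mbar chr - L_plus chr S | S. S \<subseteq> Mbar chr} \<union> {Mbar chr - L_minus chr S | S. S \<subseteq> Mbar chr})) B"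
    unfolding openin_topology_generated_by_iff using assms by (rule generate_topology_on.Basis)
  moreover have "B \<subseteq> Mbar chr" using assms by blast
  ultimately show ?thesis unfolding Tbar_def openin_subtopology by blast
qed

lemma openin_Tbar_Mbar_diff_L_plus: "S \<subseteq> Mbar chr \<Longrightarrow> openin (Tbar chr) (Mbar chr - L_plus chr S)"
  by (rule openin_Tbar_generator) blast

lemma openin_Tbar_Mbar_diff_L_minus: "S \<subseteq> Mbar chr \<Longrightarrow> openin (Tbar chr) (Mbar chr - L_minus chr S)"
  by (rule openin_Tbar_generator) blast

lemma lim_fut_const_imp_eq:
  assumes "future_set chr G" and "lim_fut chr (\<lambda>n. G) F"
  shows "F = G"
proof
  show "F \<subseteq> G" using assms(2) unfolding lim_fut_def by auto
next
  show "G \<subseteq> F"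
  proof
    fix y assume "y \<in> G"
    then obtain s where s: "chr s y" and "Ifut chr {s} \<subseteq> G"
      using assms(1) unfolding future_set_def Ifut_def by blast
    then have "Ifut chr {s} \<subseteq> F"
      using assms(2) unfolding lim_fut_def by fastforce
    with s show "y \<in> F" unfolding Ifut_def by blast
  qed
qed

lemma Mbar_empty_past_imp_IF: "({}, F) \<in> Mbar chr \<Longrightarrow> IF chr F"
  unfolding Mbar_def Rpf_def maximal_IP_in_def IP_def by blast

lemma Mbar_same_past_in_Rpf:
  assumes "P \<noteq> {}" and "(P, F) \<in> Mbar chr" and "(P, F') \<in> Mbar chr" and "F \<noteq> F'"
  shows "(P, F) \<in> Rpf chr"
proof -
  have no_empty_future: "(P, {}) \<notin> Rpf chr"
    unfolding Rpf_def maximal_IF_in_def IF_def by blast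
  show ?thesis
    using assms no_empty_future unfolding Mbar_def by auto
qed

lemma Rpf_same_past_subset_imp_eq:
  "(P, F) \<in> Rpf chr \<Longrightarrow> (P, F') \<in> Rpf chr \<Longrightarrow> F \<subseteq> F' \<Longrightarrow> F = F'"
  unfolding Rpf_def maximal_IF_in_def by blast

lemma notin_L_plus_singleton:
  assumes "snd R \<noteq> {}" and "\<not> snd R \<subseteq> G" and "R \<noteq> (Q, G)"
  shows "R \<notin> L_plus chr {(Q, G)}"
  using assms unfolding L_plus_def Cl_FB_def LIF_plus_def by auto

lemma notin_L_minus_singleton_empty_past:
  assumes "future_set chr G" and "F \<noteq> G"
  shows "({}, F) \<notin> L_minus chr {({}, G)}"
proof
  assume "({}, F) \<in> L_minus chr {({}, G)}"
  moreover have "LIP_minus chr {({}, G)} = {}" unfolding LIP_minus_def by auto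
  ultimately have "({}, F) \<in> Cl_PB chr {({}, G)}" by (simp add: L_minus_def)
  then have "lim_fut chr (\<lambda>n. G) F"
    using assms(2) unfolding Cl_PB_def by auto
  with assms show False using lim_fut_const_imp_eq by blast
qed

lemma Mbar_same_past_separated:
  assumes i: "(P, Fi) \<in> Mbar chr" and j: "(P, Fj) \<in> Mbar chr" and "Fi \<noteq> Fj"
  shows "\<exists>U. openin (Tbar chr) U \<and> (P, Fi) \<in> U \<and> (P, Fj) \<notin> U"
proof (cases "P = {}")
  case True
  have "future_set chr Fj" using j True Mbar_empty_past_imp_IF IF_def by blast
  then have "(P, Fi) \<notin> L_minus chr {(P, Fj)}"
    using True \<open>Fi \<noteq> Fj\<close> notin_L_minus_singleton_empty_past by blast
  moreover have "(P, Fj) \<in> L_minus chr {(P, Fj)}" unfolding L_minus_def Cl_PB_def by blast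
  ultimately show ?thesis
    using i j openin_Tbar_Mbar_diff_L_minus[of "{(P, Fj)}" chr] by blast
next
  case False
  have "(P, Fi) \<in> Rpf chr" "(P, Fj) \<in> Rpf chr"
    using False i j \<open>Fi \<noteq> Fj\<close> Mbar_same_past_in_Rpf by metis+
  then have "Fi \<noteq> {}" and "\<not> Fi \<subseteq> Fj"
    using \<open>Fi \<noteq> Fj\<close> Rpf_same_past_subset_imp_eq[of P Fi chr Fj]
    unfolding Rpf_def maximal_IF_in_def IF_def by auto
  then have "(P, Fi) \<notin> L_plus chr {(P, Fj)}"
    using \<open>Fi \<noteq> Fj\<close> notin_L_plus_singleton[of "(P, Fi)"] by simp
  moreover have "(P, Fj) \<in> L_plus chr {(P, Fj)}" unfolding L_plus_def Cl_FB_def by blast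
  ultimately show ?thesis
    using i j openin_Tbar_Mbar_diff_L_plus[of "{(P, Fj)}" chr] by blast
qed

theorem theorem11:
  fixes A :: "('m::{t2_space, second_countable_topology}, 'n::finite) chart set"
    and g :: "('m,'n) chart \<Rightarrow> real^'n \<Rightarrow> real^'n^'n"
    and T :: "('m,'n) chart \<Rightarrow> real^'n \<Rightarrow> real^'n"
    and \<gamma> :: "real \<Rightarrow> 'm" and I :: "real set"
    and Fi Fj :: "'m set"
  assumes "spacetime A g T"
    and "strongly_causal A g T"
    and "fd_timelike_curve A g T \<gamma> I"
    and "(Ipast (chron A g T) (\<gamma> ` I), Fi) \<in> Mbar (chron A g T)"
    and "(Ipast (chron A g T) (\<gamma> ` I), Fj) \<in> Mbar (chron A g T)"
    and "(Ipast (chron A g T) (\<gamma> ` I), Fi) \<noteq> (Ipast (chron A g T) (\<gamma> ` I), Fj)"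
  shows "(\<exists>U. openin (Tbar (chron A g T)) U \<and>
            (Ipast (chron A g T) (\<gamma> ` I), Fi) \<in> U \<and> (Ipast (chron A g T) (\<gamma> ` I), Fj) \<notin> U) \<and>
         (\<exists>U. openin (Tbar (chron A g T)) U \<and>
            (Ipast (chron A g T) (\<gamma> ` I), Fj) \<in> U \<and> (Ipast (chron A g T) (\<gamma> ` I), Fi) \<notin> U)"
  using Mbar_same_past_separated[OF assms(4,5)] Mbar_same_past_separated[OF assms(5,4)] assms(6)
  by auto

end
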